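(* Let $G=(V,E)$ be a forest with $|V|=n$. For every integer $k\ge 0$ with $2k\le n$, the coefficient of $p_{(2^k,1^{n-2k})}$ in the expansion of $X_G$ in the power-sum basis equals $(-1)^k m_k$, where $m_k$ is the number of $k$-matchings of $G$. Consequently the matching polynomial of $G$ is $$\mu_G(x)=\sum_{k}\bigl|c_{(2^k,1^{n-2k})}\bigr|\,x^k,$$ where $c_\lambda$ denotes the coefficient of $p_\lambda$ in $X_G$; in particular $\mu_G$ is determined by $X_G$.
   Context: For a graph $G=(V,E)$ with $V=\{v_1,\dots,v_n\}$, a proper coloring is a map $\kappa:V\to\mathbb{N}$ with $\kappa(u)\ne\kappa(v)$ whenever $(u,v)\in E$. The chromatic symmetric function is $X_G=\sum_\kappa x_{\kappa(v_1)}\cdots x_{\kappa(v_n)}$, summed over proper colorings. $p_m=\sum_{i\ge1}x_i^m$ and $p_\lambda=p_{\lambda_1}\cdots p_{\lambda_\ell}$ for a partition $\lambda$; the $p_\lambda$ form a basis of symmetric functions. The notation $(2^k,1^{j})$ denotes the partition with $k$ parts equal to $2$ and $j$ parts equal to $1$. A $k$-matching of $G$ is a set of $k$ edges, no two sharing an endpoint; the matching polynomial is $\mu_G(x)=\sum_k m_k x^k$ with $m_k$ the number of $k$-matchings. *)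

theory Defs
  imports Main "HOL-Library.FuncSet" "HOL-Computational_Algebra.Polynomial"
begin

definition simple_graph :: "'a set \<Rightarrow> 'a set set \<Rightarrow> bool" where
  "simple_graph V E \<longleftrightarrow> finite V \<and>
     (\<forall>e\<in>E. \<exists>u v. e = {u, v} \<and> u \<noteq> v \<and> u \<in> V \<and> v \<in> V)"

definition has_cycle :: "'a set set \<Rightarrow> bool" where
  "has_cycle E \<longleftrightarrow> (\<exists>vs. 3 \<le> length vs \<and> distinct vs \<and>
     (\<forall>i < length vs. {vs ! i, vs ! ((i + 1) mod length vs)} \<in> E))"

definition forest :: "'a set \<Rightarrow> 'a set set \<Rightarrow> bool" where
  "forest V E \<longleftrightarrow> simple_graph V E \<and> \<not> has_cycle E"

definition proper_coloring :: "'a set \<Rightarrow> 'a set set \<Rightarrow> ('a \<Rightarrow> nat) \<Rightarrow> bool" where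
  "proper_coloring V E \<kappa> \<longleftrightarrow> (\<forall>u\<in>V. \<forall>v\<in>V. {u, v} \<in> E \<longrightarrow> \<kappa> u \<noteq> \<kappa> v)"

text \<open>Evaluation of the chromatic symmetric function X_G at a finitely supported point
  x = (x_0, x_1, ...) (colours are natural numbers). Only colourings into the support of x
  contribute, so the (formally infinite) sum reduces to this finite sum.\<close>
definition chrom_sym_eval :: "'a set \<Rightarrow> 'a set set \<Rightarrow> (nat \<Rightarrow> real) \<Rightarrow> real" where
  "chrom_sym_eval V E x =
     (\<Sum>\<kappa> \<in> {\<kappa> \<in> V \<rightarrow>\<^sub>E {i. x i \<noteq> 0}. proper_coloring V E \<kappa>}. \<Prod>v\<in>V. x (\<kappa> v))"

definition power_sum :: "nat \<Rightarrow> (nat \<Rightarrow> real) \<Rightarrow> real" where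
  "power_sum m x = (\<Sum>i \<in> {i. x i \<noteq> 0}. x i ^ m)"

definition power_sum_part :: "nat list \<Rightarrow> (nat \<Rightarrow> real) \<Rightarrow> real" where
  "power_sum_part lam x = (\<Prod>m \<leftarrow> lam. power_sum m x)"

definition partitions :: "nat \<Rightarrow> nat list set" where
  "partitions n = {lam. sorted_wrt (\<ge>) lam \<and> 0 \<notin> set lam \<and> sum_list lam = n}"

text \<open>c is the family of coefficients of X_G in the power-sum basis:
  X_G = sum over partitions lambda of n of c(lambda) p_lambda, as symmetric functions,
  i.e. the identity holds at every finitely supported point.\<close>
definition p_expansion :: "'a set \<Rightarrow> 'a set set \<Rightarrow> (nat list \<Rightarrow> real) \<Rightarrow> bool" where
  "p_expansion V E c \<longleftrightarrow> (\<forall>x. finite {i. x i \<noteq> 0} \<longrightarrow>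
     chrom_sym_eval V E x = (\<Sum>lam \<in> partitions (card V). c lam * power_sum_part lam x))"

definition two_one_part :: "nat \<Rightarrow> nat \<Rightarrow> nat list" where
  "two_one_part k n = replicate k 2 @ replicate (n - 2 * k) 1"

definition matchings :: "'a set set \<Rightarrow> nat \<Rightarrow> 'a set set set" where
  "matchings E k = {M. M \<subseteq> E \<and> card M = k \<and> pairwise disjnt M}"

definition matching_poly :: "'a set set \<Rightarrow> real poly" where
  "matching_poly E = (\<Sum>k \<le> card E. monom (real (card (matchings E k))) k)"

end

theory Submission
  imports Defs "HOL-Library.Multiset"
begin

text \<open>Expanding the indicator of properness of a colouring by inclusion-exclusion over
  monochromatic edges gives Stanley's formula \<open>X_G = \<Sum>S\<subseteq>E. (-1)^|S| p_\<lambda>(S)\<close>, where \<open>\<lambda>(S)\<close>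
  lists the component sizes of the spanning subgraph \<open>(V, S)\<close>. Such a type has only parts 1
  and 2 exactly when \<open>S\<close> is a matching, and then it is \<open>(2^|S|, 1^(n-2|S|))\<close>; hence the
  coefficient of \<open>p_(2^k,1^(n-2k))\<close> is \<open>(-1)^k m_k\<close>. This coefficient is the same in every
  expansion: at a point with \<open>A\<close> coordinates equal to 1 and \<open>B\<close> equal to -1, \<open>p_\<lambda>\<close> becomes
  \<open>(A+B)^e (A-B)^o\<close> with \<open>e\<close>, \<open>o\<close> the numbers of even and odd parts of \<open>\<lambda>\<close>, and
  \<open>(2^k, 1^(n-2k))\<close> is the only partition of \<open>n\<close> with \<open>k\<close> even and \<open>n-2k\<close> odd parts.\<close>

lemma coeffs_eq_0_if_infinitely_many_roots:
  fixes C :: "nat \<Rightarrow> 'a::idom"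
  assumes "infinite Z" and roots: "\<And>z. z \<in> Z \<Longrightarrow> (\<Sum>e\<le>n. C e * z ^ e) = 0" and "e \<le> n"
  shows "C e = 0"
proof -
  define p where "p = (\<Sum>e\<le>n. monom (C e) e)"
  have "Z \<subseteq> {z. poly p z = 0}"
    using roots by (auto simp: p_def poly_sum poly_monom)
  then have "p = 0"
    using \<open>infinite Z\<close> poly_roots_finite finite_subset by blast
  moreover have "coeff p e = C e"
    using \<open>e \<le> n\<close> by (simp add: p_def coeff_sum coeff_monom)
  ultimately show ?thesis by simp
qed

lemma coeffs_eq_0_if_vanishes_at_sums_and_differences:
  fixes D :: "nat \<Rightarrow> nat \<Rightarrow> real"
  assumes vanish: "\<And>A B :: nat.
      (\<Sum>e\<le>n. \<Sum>q\<le>n. D e q * (real A + real B) ^ e * (real A - real B) ^ q) = 0"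
    and "e \<le> n" "q \<le> n"
  shows "D e q = 0"
proof -
  \<comment> \<open>With \<open>A = B + j\<close>, the difference \<open>A - B = j\<close> is fixed while \<open>A + B\<close> takes infinitely many values.\<close>
  have inner: "(\<Sum>q\<le>n. D e q * real j ^ q) = 0" if "e \<le> n" for e j
  proof (rule coeffs_eq_0_if_infinitely_many_roots[where C = "\<lambda>e. \<Sum>q\<le>n. D e q * real j ^ q"])
    show "infinite (range (\<lambda>B::nat. 2 * real B + real j))"
      by (rule range_inj_infinite) (auto intro: injI)
    fix z assume "z \<in> range (\<lambda>B::nat. 2 * real B + real j)"
    then obtain B where "z = real (B + j) + real B" by auto
    then show "(\<Sum>e\<le>n. (\<Sum>q\<le>n. D e q * real j ^ q) * z ^ e) = 0"
      using vanish[of "B + j" B] by (simp add: sum_distrib_left mult_ac)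
  qed fact
  show ?thesis
  proof (rule coeffs_eq_0_if_infinitely_many_roots[where C = "D e"])
    show "infinite (range (real :: nat \<Rightarrow> real))"
      by (rule range_inj_infinite) (auto intro: injI)
  qed (use inner[OF \<open>e \<le> n\<close>] \<open>q \<le> n\<close> in auto)
qed

definition even_parts :: "nat list \<Rightarrow> nat" where
  "even_parts l = length (filter even l)"

definition odd_parts :: "nat list \<Rightarrow> nat" where
  "odd_parts l = length (filter odd l)"

lemma parts_weight_le_sum_list: "0 \<notin> set l \<Longrightarrow> 2 * even_parts l + odd_parts l \<le> sum_list l"
  by (induction l) (auto simp: even_parts_def odd_parts_def elim!: evenE oddE)

lemma set_subset_12_if_sum_list_eq_parts_weight:
  "0 \<notin> set l \<Longrightarrow> sum_list l = 2 * even_parts l + odd_parts l \<Longrightarrow> set l \<subseteq> {1, 2}"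
proof (induction l)
  case (Cons a l)
  have l: "2 * even_parts l + odd_parts l \<le> sum_list l"
    using Cons.prems(1) by (intro parts_weight_le_sum_list) simp
  have "a \<in> {1, 2} \<and> sum_list l = 2 * even_parts l + odd_parts l"
  proof (cases "even a")
    case True
    then have "2 \<le> a" "2 * even_parts (a # l) + odd_parts (a # l) = 2 + (2 * even_parts l + odd_parts l)"
      using Cons.prems(1) by (auto simp: even_parts_def odd_parts_def elim!: evenE)
    then show ?thesis
      using Cons.prems(2) l by simp
  next
    case False
    then have "1 \<le> a" "2 * even_parts (a # l) + odd_parts (a # l) = 1 + (2 * even_parts l + odd_parts l)"
      using Cons.prems(1) by (auto simp: even_parts_def odd_parts_def)
    then show ?thesis
      using Cons.prems(2) l by simp
  qed
  then show ?case
    using Cons by simp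
qed simp

lemma replicate_12_if_sorted_and_set_subset:
  "sorted_wrt (\<ge>) l \<Longrightarrow> set l \<subseteq> {1, 2 :: nat} \<Longrightarrow>
    l = replicate (even_parts l) 2 @ replicate (odd_parts l) 1"
proof (induction l)
  case (Cons a l)
  show ?case
  proof (cases "a = 2")
    case False
    then have "a = 1" and "\<forall>b\<in>set l. b = 1"
      using Cons.prems by fastforce+
    then have "filter even l = []" and "filter odd l = l" and "l = replicate (length l) 1"
      by (auto simp: filter_empty_conv filter_id_conv replicate_length_same)
    with \<open>a = 1\<close> show ?thesis
      by (simp add: even_parts_def odd_parts_def)
  qed (use Cons in \<open>auto simp: even_parts_def odd_parts_def\<close>)
qed (simp add: even_parts_def odd_parts_def)

lemma two_one_part_props:
  assumes "2 * k \<le> n"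
  shows "two_one_part k n \<in> partitions n" and "set (two_one_part k n) \<subseteq> {1, 2}"
    and "even_parts (two_one_part k n) = k" and "odd_parts (two_one_part k n) = n - 2 * k"
proof -
  have "sorted_wrt (\<ge>) (replicate m (a::nat))" for m a
    by (induction m) auto
  then show "two_one_part k n \<in> partitions n"
    using assms by (auto simp: two_one_part_def partitions_def sorted_wrt_append sum_list_replicate)
qed (auto simp: two_one_part_def even_parts_def odd_parts_def)

lemma partition_eq_two_one_part:
  assumes "l \<in> partitions n" and "set l \<subseteq> {1, 2}"
  shows "l = two_one_part (even_parts l) n"
proof -
  have l: "l = replicate (even_parts l) 2 @ replicate (odd_parts l) 1"
    using assms by (intro replicate_12_if_sorted_and_set_subset) (auto simp: partitions_def)
  have "n = sum_list l"
    using assms(1) by (simp add: partitions_def)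
  also from l have "sum_list l = sum_list (replicate (even_parts l) 2 @ replicate (odd_parts l) 1)"
    by (rule arg_cong)
  also have "\<dots> = 2 * even_parts l + odd_parts l"
    by (simp add: sum_list_replicate)
  finally have "n = 2 * even_parts l + odd_parts l" .
  with l show ?thesis
    by (simp add: two_one_part_def)
qed

lemma partition_eq_two_one_part_if_parts:
  assumes "l \<in> partitions n" and "2 * k \<le> n"
    and "even_parts l = k" and "odd_parts l = n - 2 * k"
  shows "l = two_one_part k n"
proof -
  have "0 \<notin> set l" and "sum_list l = 2 * even_parts l + odd_parts l"
    using assms by (auto simp: partitions_def)
  then have "set l \<subseteq> {1, 2}"
    by (rule set_subset_12_if_sum_list_eq_parts_weight)
  with assms show ?thesis
    using partition_eq_two_one_part[OF assms(1)] by simp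
qed

lemma length_le_sum_list: "0 \<notin> set l \<Longrightarrow> length l \<le> sum_list (l :: nat list)"
  by (induction l) (auto simp: Suc_le_eq)

lemma finite_partitions: "finite (partitions n)"
proof (rule finite_subset)
  show "partitions n \<subseteq> {l. set l \<subseteq> {..n} \<and> length l \<le> n}"
    using length_le_sum_list member_le_sum_list by (fastforce simp: partitions_def)
qed (rule finite_lists_length_le[OF finite_atMost])

lemma parts_le_partitions:
  assumes "l \<in> partitions n"
  shows "even_parts l \<le> n" and "odd_parts l \<le> n"
proof -
  have "length l \<le> n"
    using assms length_le_sum_list by (auto simp: partitions_def)
  then show "even_parts l \<le> n" and "odd_parts l \<le> n"
    unfolding even_parts_def odd_parts_def by (meson length_filter_le le_trans)+
qed

section \<open>Evaluation at points with coordinates \<open>\<plusminus>1\<close>\<close>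

definition sign_point :: "nat \<Rightarrow> nat \<Rightarrow> nat \<Rightarrow> real" where
  "sign_point A B i = (if i < A then 1 else if i < A + B then -1 else 0)"

lemma support_sign_point: "{i. sign_point A B i \<noteq> 0} = {..<A + B}"
  by (auto simp: sign_point_def)

lemma power_sum_sign_point:
  "power_sum m (sign_point A B) = (if even m then real A + real B else real A - real B)"
proof -
  have "power_sum m (sign_point A B) = (\<Sum>i<A. sign_point A B i ^ m) + (\<Sum>i\<in>{A..<A + B}. sign_point A B i ^ m)"
    by (simp add: power_sum_def support_sign_point lessThan_atLeast0 sum.atLeastLessThan_concat)
  also have "\<dots> = real A + (\<Sum>i\<in>{A..<A + B}. (-1) ^ m)"
    by (simp add: sign_point_def)
  finally show ?thesis by simp
qed

lemma power_sum_part_sign_point: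
  "power_sum_part l (sign_point A B) = (real A + real B) ^ even_parts l * (real A - real B) ^ odd_parts l"
  by (induction l) (auto simp: power_sum_part_def even_parts_def odd_parts_def power_sum_sign_point)

lemma two_one_coeff_eq_0_if_expansion_vanishes:
  fixes d :: "nat list \<Rightarrow> real"
  assumes vanish: "\<And>x. finite {i. x i \<noteq> 0} \<Longrightarrow> (\<Sum>l\<in>partitions n. d l * power_sum_part l x) = 0"
    and "2 * k \<le> n"
  shows "d (two_one_part k n) = 0"
proof -
  \<comment> \<open>At \<open>sign_point A B\<close> the value of \<open>p_\<lambda>\<close> depends only on \<open>(even_parts \<lambda>, odd_parts \<lambda>)\<close>.\<close>
  define D where "D e q = sum d {l. l \<in> partitions n \<and> (even_parts l, odd_parts l) = (e, q)}" for e q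
  have "(\<Sum>e\<le>n. \<Sum>q\<le>n. D e q * (real A + real B) ^ e * (real A - real B) ^ q) = 0" for A B
  proof -
    have D: "D e q * (real A + real B) ^ e * (real A - real B) ^ q
        = (\<Sum>l | l \<in> partitions n \<and> (even_parts l, odd_parts l) = (e, q). d l * power_sum_part l (sign_point A B))"
      for e q
      unfolding D_def sum_distrib_right by (auto simp: power_sum_part_sign_point mult.assoc intro!: sum.cong)
    have "(\<Sum>e\<le>n. \<Sum>q\<le>n. D e q * (real A + real B) ^ e * (real A - real B) ^ q)
        = (\<Sum>p\<in>{..n} \<times> {..n}. \<Sum>l | l \<in> partitions n \<and> (even_parts l, odd_parts l) = p.
             d l * power_sum_part l (sign_point A B))"
      by (simp add: sum.cartesian_product split_def D prod_eq_iff)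
    also have "\<dots> = (\<Sum>l\<in>partitions n. d l * power_sum_part l (sign_point A B))"
      using finite_partitions parts_le_partitions by (intro sum.group) auto
    also have "\<dots> = 0"
      by (rule vanish) (simp add: support_sign_point)
    finally show ?thesis .
  qed
  then have "D k (n - 2 * k) = 0"
    by (rule coeffs_eq_0_if_vanishes_at_sums_and_differences) (use \<open>2 * k \<le> n\<close> in auto)
  moreover have "{l. l \<in> partitions n \<and> (even_parts l, odd_parts l) = (k, n - 2 * k)} = {two_one_part k n}"
  proof (intro set_eqI iffI)
    fix l assume "l \<in> {l. l \<in> partitions n \<and> (even_parts l, odd_parts l) = (k, n - 2 * k)}"
    then show "l \<in> {two_one_part k n}"
      using partition_eq_two_one_part_if_parts \<open>2 * k \<le> n\<close> by auto
  qed (use two_one_part_props \<open>2 * k \<le> n\<close> in auto)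
  ultimately show ?thesis
    by (simp add: D_def)
qed

lemma p_expansion_two_one_coeff_unique:
  assumes "p_expansion V E c" and "p_expansion V E c'" and "2 * k \<le> card V"
  shows "c (two_one_part k (card V)) = c' (two_one_part k (card V))"
proof -
  have "(\<lambda>l. c l - c' l) (two_one_part k (card V)) = 0"
  proof (rule two_one_coeff_eq_0_if_expansion_vanishes)
    fix x :: "nat \<Rightarrow> real" assume "finite {i. x i \<noteq> 0}"
    then show "(\<Sum>l\<in>partitions (card V). (c l - c' l) * power_sum_part l x) = 0"
      using assms(1,2) by (simp add: p_expansion_def left_diff_distrib sum_subtractf)
  qed fact
  then show ?thesis by simp
qed

lemma prod_quotient:
  assumes "equiv V R" and "finite V"
  shows "prod g V = (\<Prod>B\<in>V//R. prod g B)"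
proof -
  have "prod g (\<Union>(V//R)) = (prod \<circ> prod) g (V//R)"
  proof (rule prod.Union_disjoint)
    show "\<forall>B\<in>V//R. finite B"
      using assms by (meson finite_subset in_quotient_imp_subset)
    show "\<forall>B\<in>V//R. \<forall>B'\<in>V//R. B \<noteq> B' \<longrightarrow> B \<inter> B' = {}"
      using quotient_disj[OF assms(1)] by blast
  qed
  then show ?thesis
    using Union_quotient[OF assms(1)] by simp
qed

lemma quotient_class_eq:
  assumes "equiv V R" and "B \<in> V//R" and "v \<in> B"
  shows "R``{v} = B"
proof -
  obtain a where B: "B = R``{a}"
    using assms(2) by (rule quotientE)
  with assms(3) have "(a, v) \<in> R"
    by simp
  with B show ?thesis
    using equiv_class_eq[OF assms(1)] by simp
qed

lemma bij_betw_class_functions: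
  assumes R: "equiv V R"
  shows "bij_betw (\<lambda>f. \<lambda>v\<in>V. f (R``{v})) (V//R \<rightarrow>\<^sub>E C) {\<kappa> \<in> V \<rightarrow>\<^sub>E C. \<forall>(a, b)\<in>R. \<kappa> a = \<kappa> b}"
proof (rule bij_betwI[where g = "\<lambda>\<kappa>. \<lambda>B\<in>V//R. \<kappa> (SOME v. v \<in> B)"])
  have some_in: "(SOME v. v \<in> B) \<in> B" if "B \<in> V//R" for B
    using in_quotient_imp_non_empty[OF R that] by (simp add: some_in_eq)
  have sub: "B \<subseteq> V" if "B \<in> V//R" for B
    using in_quotient_imp_subset[OF R that] .
  show "(\<lambda>f. \<lambda>v\<in>V. f (R``{v})) \<in> (V//R \<rightarrow>\<^sub>E C) \<rightarrow> {\<kappa> \<in> V \<rightarrow>\<^sub>E C. \<forall>(a, b)\<in>R. \<kappa> a = \<kappa> b}"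
    using R equiv_type[OF R] by (auto simp: quotientI equiv_class_eq)
  show "(\<lambda>\<kappa>. \<lambda>B\<in>V//R. \<kappa> (SOME v. v \<in> B)) \<in> {\<kappa> \<in> V \<rightarrow>\<^sub>E C. \<forall>(a, b)\<in>R. \<kappa> a = \<kappa> b} \<rightarrow> (V//R \<rightarrow>\<^sub>E C)"
    using some_in sub by (auto simp: PiE_def Pi_def)
  show "(\<lambda>B\<in>V//R. (\<lambda>v\<in>V. f (R``{v})) (SOME v. v \<in> B)) = f" if "f \<in> V//R \<rightarrow>\<^sub>E C" for f
  proof
    fix B
    show "(\<lambda>B\<in>V//R. (\<lambda>v\<in>V. f (R``{v})) (SOME v. v \<in> B)) B = f B"
      using that some_in[of B] sub[of B] quotient_class_eq[OF R, of B "SOME v. v \<in> B"] by (auto simp: PiE_def extensional_def)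
  qed
  show "(\<lambda>v\<in>V. (\<lambda>B\<in>V//R. \<kappa> (SOME v. v \<in> B)) (R``{v})) = \<kappa>"
    if \<kappa>: "\<kappa> \<in> {\<kappa> \<in> V \<rightarrow>\<^sub>E C. \<forall>(a, b)\<in>R. \<kappa> a = \<kappa> b}" for \<kappa>
  proof
    fix v
    show "(\<lambda>v\<in>V. (\<lambda>B\<in>V//R. \<kappa> (SOME v. v \<in> B)) (R``{v})) v = \<kappa> v"
    proof (cases "v \<in> V")
      case True
      then have v_class: "R``{v} \<in> V//R"
        by (rule quotientI)
      then have "(SOME w. w \<in> R``{v}) \<in> R``{v}"
        by (rule some_in)
      then have "\<kappa> (SOME w. w \<in> R``{v}) = \<kappa> v"
        using \<kappa> by auto
      with True v_class show ?thesis
        by simp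
    qed (use \<kappa> in \<open>auto simp: PiE_def extensional_def\<close>)
  qed
qed

lemma sum_class_constant_functions:
  fixes x :: "'b \<Rightarrow> 'c::comm_semiring_1"
  assumes R: "equiv V R" and "finite V" and "finite C"
  shows "(\<Sum>\<kappa> \<in> {\<kappa> \<in> V \<rightarrow>\<^sub>E C. \<forall>(a, b)\<in>R. \<kappa> a = \<kappa> b}. \<Prod>v\<in>V. x (\<kappa> v))
       = (\<Prod>B\<in>V//R. \<Sum>c\<in>C. x c ^ card B)"
proof -
  have "(\<Prod>v\<in>V. x (f (R``{v}))) = (\<Prod>B\<in>V//R. x (f B) ^ card B)" for f
  proof -
    have "(\<Prod>v\<in>V. x (f (R``{v}))) = (\<Prod>B\<in>V//R. \<Prod>v\<in>B. x (f (R``{v})))"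
      by (rule prod_quotient[OF R \<open>finite V\<close>])
    also have "\<dots> = (\<Prod>B\<in>V//R. \<Prod>v\<in>B. x (f B))"
      using quotient_class_eq[OF R] by (intro prod.cong refl) simp
    finally show ?thesis by simp
  qed
  then have "(\<Sum>\<kappa> \<in> {\<kappa> \<in> V \<rightarrow>\<^sub>E C. \<forall>(a, b)\<in>R. \<kappa> a = \<kappa> b}. \<Prod>v\<in>V. x (\<kappa> v))
      = (\<Sum>f\<in>V//R \<rightarrow>\<^sub>E C. \<Prod>B\<in>V//R. x (f B) ^ card B)"
    by (simp add: sum.reindex_bij_betw[OF bij_betw_class_functions[OF R], symmetric] cong: prod.cong)
  also have "\<dots> = (\<Prod>B\<in>V//R. \<Sum>c\<in>C. x c ^ card B)"
    using assms finite_quotient[OF \<open>finite V\<close> equiv_type[OF R]] by (intro prod_sum_PiE[symmetric]) auto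
  finally show ?thesis .
qed

section \<open>Components of spanning subgraphs\<close>

lemma simple_graph_subset: "simple_graph V E \<Longrightarrow> S \<subseteq> E \<Longrightarrow> simple_graph V S"
  by (auto simp: simple_graph_def)

lemma finite_edges:
  assumes "simple_graph V E"
  shows "finite E"
proof (rule finite_subset)
  show "E \<subseteq> Pow V"
    using assms by (auto simp: simple_graph_def)
qed (use assms in \<open>simp add: simple_graph_def\<close>)

lemma card_edge: "simple_graph V S \<Longrightarrow> e \<in> S \<Longrightarrow> card e = 2"
  by (auto simp: simple_graph_def)

lemma edge_eq_doubleton:
  assumes "simple_graph V S" and "e \<in> S"
  obtains u v where "e = {u, v}" and "u \<noteq> v" and "u \<in> V" and "v \<in> V"
  using assms by (auto simp: simple_graph_def)

definition edge_rel :: "'a set set \<Rightarrow> ('a \<times> 'a) set" where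
  "edge_rel S = {(a, b). {a, b} \<in> S}"

definition component_rel :: "'a set \<Rightarrow> 'a set set \<Rightarrow> ('a \<times> 'a) set" where
  "component_rel V S = (edge_rel S)\<^sup>* \<inter> V \<times> V"

definition components :: "'a set \<Rightarrow> 'a set set \<Rightarrow> 'a set set" where
  "components V S = V // component_rel V S"

text \<open>\<open>component_type V S\<close> is the partition \<open>\<lambda>(S)\<close> of \<open>card V\<close>.\<close>

definition component_type :: "'a set \<Rightarrow> 'a set set \<Rightarrow> nat list" where
  "component_type V S = rev (sorted_list_of_multiset (image_mset card (mset_set (components V S))))"

lemma equiv_component_rel: "equiv V (component_rel V S)"
proof -
  have "sym (edge_rel S)"
    by (auto simp: sym_def edge_rel_def insert_commute)
  then have "sym ((edge_rel S)\<^sup>*)"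
    by (rule sym_rtrancl)
  then show ?thesis
    unfolding equiv_def refl_on_def sym_def trans_def component_rel_def
    by (auto intro: rtrancl_trans)
qed

lemma component_rel_if_edge:
  assumes "simple_graph V S" and "{a, b} \<in> S"
  shows "(a, b) \<in> component_rel V S"
proof -
  have "a \<in> V" and "b \<in> V"
    using assms by (auto simp: simple_graph_def doubleton_eq_iff)
  with assms(2) show ?thesis
    by (auto simp: component_rel_def edge_rel_def)
qed

lemma finite_components: "finite V \<Longrightarrow> finite (components V S)"
  unfolding components_def by (rule finite_quotient[OF _ equiv_type[OF equiv_component_rel]])

lemma component_subset: "B \<in> components V S \<Longrightarrow> B \<subseteq> V"
  using in_quotient_imp_subset[OF equiv_component_rel] by (auto simp: components_def)

lemma card_component_pos:
  assumes "finite V" and "B \<in> components V S"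
  shows "card B > 0"
  using assms component_subset[OF assms(2)] in_quotient_imp_non_empty[OF equiv_component_rel]
  by (auto simp: components_def card_gt_0_iff intro: finite_subset)

lemma component_eq_class: "B \<in> components V S \<Longrightarrow> v \<in> B \<Longrightarrow> B = component_rel V S `` {v}"
  using quotient_class_eq[OF equiv_component_rel] by (metis components_def)

lemma components_disjoint:
  "B \<in> components V S \<Longrightarrow> B' \<in> components V S \<Longrightarrow> B \<noteq> B' \<Longrightarrow> B \<inter> B' = {}"
  using quotient_disj[OF equiv_component_rel] by (metis components_def)

lemma sum_card_components:
  assumes "finite V"
  shows "(\<Sum>B\<in>components V S. card B) = card V"
proof -
  have "card (\<Union>(components V S)) = (\<Sum>B\<in>components V S. card B)"
  proof (rule card_Union_disjoint)
    show "pairwise disjnt (components V S)"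
      unfolding pairwise_def disjnt_def using components_disjoint[of _ V S] by blast
    show "finite B" if "B \<in> components V S" for B
      using assms component_subset[OF that] by (rule finite_subset[rotated])
  qed
  then show ?thesis
    using Union_quotient[OF equiv_component_rel, of V S] by (simp add: components_def)
qed

lemma mset_component_type: "mset (component_type V S) = image_mset card (mset_set (components V S))"
  by (simp add: component_type_def)

lemma set_component_type: "finite V \<Longrightarrow> set (component_type V S) = card ` components V S"
  by (metis finite_components finite_set_mset_mset_set mset_component_type set_image_mset set_mset_mset)

lemma component_type_in_partitions:
  assumes "finite V"
  shows "component_type V S \<in> partitions (card V)"
proof -
  have "sum_list (component_type V S) = sum_mset (mset (component_type V S))"
    by (simp add: sum_mset_sum_list)
  also have "\<dots> = card V"
    using sum_card_components[OF assms] by (simp add: mset_component_type sum_unfold_sum_mset)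
  moreover have "0 \<notin> set (component_type V S)"
    by (auto simp: set_component_type[OF assms] dest: card_component_pos[OF assms])
  ultimately show ?thesis
    by (simp add: partitions_def component_type_def sorted_wrt_rev)
qed

lemma size_filter_image_mset_set:
  "finite A \<Longrightarrow> size (filter_mset P (image_mset f (mset_set A))) = card {a\<in>A. P (f a)}"
  by (simp add: filter_mset_image_mset)

lemma even_parts_component_type:
  "finite V \<Longrightarrow> even_parts (component_type V S) = card {B\<in>components V S. even (card B)}"
  by (metis even_parts_def finite_components mset_component_type mset_filter size_mset
      size_filter_image_mset_set)

lemma power_sum_part_component_type:
  "power_sum_part (component_type V S) x = (\<Prod>B\<in>components V S. power_sum (card B) x)"
proof -
  have "power_sum_part (component_type V S) x = prod_mset (mset (map (\<lambda>m. power_sum m x) (component_type V S)))"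
    by (metis power_sum_part_def prod_mset_prod_list)
  then show ?thesis
    by (simp add: mset_component_type multiset.map_comp comp_def prod_unfold_prod_mset)
qed

section \<open>Stanley's expansion\<close>

definition monochromatic :: "('a \<Rightarrow> nat) \<Rightarrow> 'a set \<Rightarrow> bool" where
  "monochromatic \<kappa> e \<longleftrightarrow> (\<forall>a\<in>e. \<forall>b\<in>e. \<kappa> a = \<kappa> b)"

lemma all_monochromatic_iff_constant_on_components:
  assumes S: "simple_graph V S"
  shows "(\<forall>e\<in>S. monochromatic \<kappa> e) \<longleftrightarrow> (\<forall>(a, b)\<in>component_rel V S. \<kappa> a = \<kappa> b)"
proof
  assume mono: "\<forall>e\<in>S. monochromatic \<kappa> e"
  show "\<forall>(a, b)\<in>component_rel V S. \<kappa> a = \<kappa> b"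
  proof clarify
    fix a b assume "(a, b) \<in> component_rel V S"
    then have "(a, b) \<in> (edge_rel S)\<^sup>*"
      by (simp add: component_rel_def)
    then show "\<kappa> a = \<kappa> b"
    proof (induction rule: rtrancl_induct)
      case (step y z)
      then have "{y, z} \<in> S"
        by (simp add: edge_rel_def)
      with mono step.IH show ?case
        by (auto simp: monochromatic_def)
    qed simp
  qed
next
  assume const: "\<forall>(a, b)\<in>component_rel V S. \<kappa> a = \<kappa> b"
  show "\<forall>e\<in>S. monochromatic \<kappa> e"
  proof
    fix e assume "e \<in> S"
    with S obtain u v where "e = {u, v}"
      by (blast elim: edge_eq_doubleton)
    with \<open>e \<in> S\<close> have "\<kappa> u = \<kappa> v"
      using const component_rel_if_edge[OF S] by fastforce
    with \<open>e = {u, v}\<close> show "monochromatic \<kappa> e"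
      by (auto simp: monochromatic_def)
  qed
qed

lemma proper_coloring_iff_no_monochromatic_edge:
  assumes E: "simple_graph V E"
  shows "proper_coloring V E \<kappa> \<longleftrightarrow> (\<forall>e\<in>E. \<not> monochromatic \<kappa> e)"
proof
  assume proper: "proper_coloring V E \<kappa>"
  show "\<forall>e\<in>E. \<not> monochromatic \<kappa> e"
  proof
    fix e assume "e \<in> E"
    with E obtain u v where "e = {u, v}" "u \<in> V" "v \<in> V"
      by (blast elim: edge_eq_doubleton)
    with proper \<open>e \<in> E\<close> show "\<not> monochromatic \<kappa> e"
      by (auto simp: proper_coloring_def monochromatic_def)
  qed
qed (auto simp: proper_coloring_def monochromatic_def)

lemma sum_monochromatic_colorings:
  assumes S: "simple_graph V S" and "finite {i. x i \<noteq> 0}"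
  shows "(\<Sum>\<kappa> \<in> {\<kappa> \<in> V \<rightarrow>\<^sub>E {i. x i \<noteq> 0}. \<forall>e\<in>S. monochromatic \<kappa> e}. \<Prod>v\<in>V. x (\<kappa> v))
       = power_sum_part (component_type V S) x"
proof -
  have "finite V"
    using S by (simp add: simple_graph_def)
  then show ?thesis
    using sum_class_constant_functions[OF equiv_component_rel \<open>finite V\<close> assms(2), of x S]
    by (simp add: all_monochromatic_iff_constant_on_components[OF S] power_sum_part_component_type
        components_def power_sum_def)
qed

lemma of_bool_all_not_eq_sum_subsets:
  assumes "finite E"
  shows "(of_bool (\<forall>e\<in>E. \<not> P e) :: 'b::comm_ring_1) = (\<Sum>S\<in>Pow E. (-1) ^ card S * of_bool (\<forall>e\<in>S. P e))"
proof -
  have prod_of_bool: "(\<Prod>e\<in>A. of_bool (Q e) :: 'b) = of_bool (\<forall>e\<in>A. Q e)" if "finite A" for A Q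
    using that by (induction A rule: finite_induct) auto
  have "(of_bool (\<forall>e\<in>E. \<not> P e) :: 'b) = (\<Prod>e\<in>E. - of_bool (P e) + 1)"
    using prod_of_bool[OF assms, of "\<lambda>e. \<not> P e"] by (simp add: of_bool_not_iff)
  also have "\<dots> = (\<Sum>S\<in>Pow E. (\<Prod>e\<in>S. - of_bool (P e)) * (\<Prod>e\<in>E - S. 1))"
    by (rule prod_add[OF assms])
  also have "\<dots> = (\<Sum>S\<in>Pow E. (-1) ^ card S * of_bool (\<forall>e\<in>S. P e))"
    using assms by (intro sum.cong refl) (simp add: prod_uminus prod_of_bool finite_subset)
  finally show ?thesis .
qed

lemma chrom_sym_eval_eq_sum_edge_subsets:
  assumes E: "simple_graph V E" and fin: "finite {i. x i \<noteq> 0}"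
  shows "chrom_sym_eval V E x = (\<Sum>S\<in>Pow E. (-1) ^ card S * power_sum_part (component_type V S) x)"
proof -
  let ?K = "V \<rightarrow>\<^sub>E {i. x i \<noteq> 0}"
  have "finite ?K"
    using E fin by (simp add: simple_graph_def finite_PiE)
  have "chrom_sym_eval V E x = (\<Sum>\<kappa>\<in>?K. of_bool (proper_coloring V E \<kappa>) * (\<Prod>v\<in>V. x (\<kappa> v)))"
    unfolding chrom_sym_eval_def by (auto simp: sum.inter_filter[OF \<open>finite ?K\<close>] intro!: sum.cong)
  also have "\<dots> = (\<Sum>\<kappa>\<in>?K. \<Sum>S\<in>Pow E. (-1) ^ card S * (of_bool (\<forall>e\<in>S. monochromatic \<kappa> e) * (\<Prod>v\<in>V. x (\<kappa> v))))"
    by (simp add: proper_coloring_iff_no_monochromatic_edge[OF E] of_bool_all_not_eq_sum_subsets[OF finite_edges[OF E]]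
        sum_distrib_right mult.assoc)
  also have "\<dots> = (\<Sum>S\<in>Pow E. (-1) ^ card S * (\<Sum>\<kappa> \<in> {\<kappa>\<in>?K. \<forall>e\<in>S. monochromatic \<kappa> e}. \<Prod>v\<in>V. x (\<kappa> v)))"
    by (subst sum.swap) (auto simp: sum_distrib_left sum.inter_filter[OF \<open>finite ?K\<close>] intro!: sum.cong)
  also have "\<dots> = (\<Sum>S\<in>Pow E. (-1) ^ card S * power_sum_part (component_type V S) x)"
    using simple_graph_subset[OF E] by (simp add: sum_monochromatic_colorings[OF _ fin])
  finally show ?thesis .
qed

definition stanley_coeff :: "'a set \<Rightarrow> 'a set set \<Rightarrow> nat list \<Rightarrow> real" where
  "stanley_coeff V E l = (\<Sum>S | S \<subseteq> E \<and> component_type V S = l. (-1) ^ card S)"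

lemma p_expansion_stanley_coeff:
  assumes E: "simple_graph V E"
  shows "p_expansion V E (stanley_coeff V E)"
  unfolding p_expansion_def
proof (intro allI impI)
  fix x :: "nat \<Rightarrow> real" assume fin: "finite {i. x i \<noteq> 0}"
  have "finite V"
    using E by (simp add: simple_graph_def)
  have "chrom_sym_eval V E x = (\<Sum>S\<in>Pow E. (-1) ^ card S * power_sum_part (component_type V S) x)"
    by (rule chrom_sym_eval_eq_sum_edge_subsets[OF E fin])
  also have "\<dots> = (\<Sum>l\<in>partitions (card V). \<Sum>S | S \<in> Pow E \<and> component_type V S = l.
      (-1) ^ card S * power_sum_part (component_type V S) x)"
    using finite_edges[OF E] finite_partitions component_type_in_partitions[OF \<open>finite V\<close>]
    by (intro sum.group[symmetric]) auto
  also have "\<dots> = (\<Sum>l\<in>partitions (card V). stanley_coeff V E l * power_sum_part l x)"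
    unfolding stanley_coeff_def by (intro sum.cong refl) (auto simp: sum_distrib_right)
  finally show "chrom_sym_eval V E x = (\<Sum>l\<in>partitions (card V). stanley_coeff V E l * power_sum_part l x)" .
qed

section \<open>Matchings\<close>

lemma component_subset_edge:
  assumes "pairwise disjnt S" and "e \<in> S" and "v \<in> e" and "(v, w) \<in> (edge_rel S)\<^sup>*"
  shows "w \<in> e"
  using assms(4)
proof (induction rule: rtrancl_induct)
  case (step y z)
  then have "{y, z} \<in> S"
    by (simp add: edge_rel_def)
  moreover have "\<not> disjnt {y, z} e"
    using step.IH by (auto simp: disjnt_def)
  ultimately have "{y, z} = e"
    using assms(1,2) by (metis pairwiseD)
  then show ?case
    by auto
qed (use assms(3) in simp)

lemma card_component_le_2_if_pairwise_disjnt: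
  assumes S: "simple_graph V S" and "pairwise disjnt S" and B: "B \<in> components V S"
  shows "card B \<le> 2"
proof -
  obtain v where v: "v \<in> V" "B = component_rel V S `` {v}"
    using B unfolding components_def by (rule quotientE)
  then have reach: "(v, w) \<in> (edge_rel S)\<^sup>*" if "w \<in> B" for w
    using that by (simp add: component_rel_def)
  show ?thesis
  proof (cases "\<exists>e\<in>S. v \<in> e")
    case True
    then obtain e where "e \<in> S" "v \<in> e"
      by blast
    then have "B \<subseteq> e"
      using component_subset_edge[OF assms(2)] reach by blast
    moreover have "card e = 2" "finite e"
      using card_edge[OF S \<open>e \<in> S\<close>] by (auto intro: card_ge_0_finite)
    ultimately show ?thesis
      using card_mono by metis
  next
    case False
    have "w = v" if "w \<in> B" for w
      using reach[OF that]
    proof (cases rule: converse_rtranclE)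
      case (step y)
      then have "{v, y} \<in> S"
        by (simp add: edge_rel_def)
      with False show ?thesis
        by auto
    qed simp
    then have "B \<subseteq> {v}"
      by blast
    then show ?thesis
      using card_mono[of "{v}" B] by simp
  qed
qed

lemma edges_eq_components_of_card_2:
  assumes S: "simple_graph V S" and "finite V" and le2: "\<And>B. B \<in> components V S \<Longrightarrow> card B \<le> 2"
  shows "S = {B \<in> components V S. card B = 2}"
proof (intro set_eqI iffI)
  fix e assume "e \<in> S"
  with S obtain a b where e: "e = {a, b}" "a \<noteq> b" "a \<in> V"
    by (blast elim: edge_eq_doubleton)
  let ?B = "component_rel V S `` {a}"
  have B: "?B \<in> components V S"
    using e(3) by (simp add: components_def quotientI)
  have "finite ?B"
    using component_subset[OF B] \<open>finite V\<close> by (rule finite_subset)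
  moreover have "e \<subseteq> ?B"
    using e component_rel_if_edge[OF S] \<open>e \<in> S\<close> equiv_class_self[OF equiv_component_rel] by auto
  moreover have "card ?B \<le> card e"
    using le2[OF B] e by simp
  ultimately have "e = ?B"
    by (rule card_seteq)
  with B e show "e \<in> {B \<in> components V S. card B = 2}"
    by simp
next
  fix B assume "B \<in> {B \<in> components V S. card B = 2}"
  then have B: "B \<in> components V S" and "card B = 2"
    by auto
  then obtain a b where ab: "B = {a, b}" "a \<noteq> b"
    by (auto simp: card_2_iff)
  have B_eq: "B = component_rel V S `` {a}"
    using component_eq_class[OF B] ab by simp
  then have "(a, b) \<in> (edge_rel S)\<^sup>*"
    using ab by (auto simp: component_rel_def)
  then show "B \<in> S"
  proof (cases rule: converse_rtranclE)
    case (step w)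
    then have aw: "{a, w} \<in> S"
      by (simp add: edge_rel_def)
    then have "w \<in> B" and "w \<noteq> a"
      using B_eq component_rel_if_edge[OF S aw] card_edge[OF S aw] by auto
    with ab aw show ?thesis
      by auto
  qed (use ab in simp)
qed

lemma component_type_eq_two_one_part_iff:
  assumes S: "simple_graph V S" and k: "2 * k \<le> card V"
  shows "component_type V S = two_one_part k (card V) \<longleftrightarrow> pairwise disjnt S \<and> card S = k"
proof -
  have "finite V"
    using S by (simp add: simple_graph_def)
  have le2_iff: "(\<forall>B\<in>components V S. card B \<le> 2) \<longleftrightarrow> pairwise disjnt S"
  proof
    assume "\<forall>B\<in>components V S. card B \<le> 2"
    then have "S \<subseteq> components V S"
      using edges_eq_components_of_card_2[OF S \<open>finite V\<close>] by blast
    then show "pairwise disjnt S"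
      using components_disjoint by (fastforce simp: pairwise_def disjnt_def)
  qed (use card_component_le_2_if_pairwise_disjnt[OF S] in blast)
  have set_iff: "set (component_type V S) \<subseteq> {1, 2} \<longleftrightarrow> (\<forall>B\<in>components V S. card B \<le> 2)"
    using card_component_pos[OF \<open>finite V\<close>, of _ S] by (fastforce simp: set_component_type[OF \<open>finite V\<close>])
  have even_parts: "even_parts (component_type V S) = card S" if "\<forall>B\<in>components V S. card B \<le> 2"
  proof -
    have "{B \<in> components V S. even (card B)} = {B \<in> components V S. card B = 2}"
      using that card_component_pos[OF \<open>finite V\<close>, of _ S] by (fastforce elim!: evenE)
    then show ?thesis
      using edges_eq_components_of_card_2[OF S \<open>finite V\<close>] that
      by (simp add: even_parts_component_type[OF \<open>finite V\<close>])
  qed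
  show ?thesis
  proof
    assume "component_type V S = two_one_part k (card V)"
    then show "pairwise disjnt S \<and> card S = k"
      using two_one_part_props[OF k] le2_iff set_iff even_parts by auto
  next
    assume "pairwise disjnt S \<and> card S = k"
    then show "component_type V S = two_one_part k (card V)"
      using partition_eq_two_one_part[OF component_type_in_partitions[OF \<open>finite V\<close>]]
        le2_iff set_iff even_parts by auto
  qed
qed

lemma stanley_coeff_two_one_part:
  assumes E: "simple_graph V E" and "2 * k \<le> card V"
  shows "stanley_coeff V E (two_one_part k (card V)) = (-1) ^ k * real (card (matchings E k))"
proof -
  have "{S. S \<subseteq> E \<and> component_type V S = two_one_part k (card V)} = matchings E k"
    using component_type_eq_two_one_part_iff[OF simple_graph_subset[OF E] assms(2)]
    by (auto simp: matchings_def)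
  then have "stanley_coeff V E (two_one_part k (card V)) = (\<Sum>S\<in>matchings E k. (-1) ^ card S)"
    by (simp add: stanley_coeff_def)
  also have "\<dots> = (\<Sum>S\<in>matchings E k. (-1) ^ k)"
    by (simp add: matchings_def)
  finally show ?thesis
    by simp
qed

lemma matching_card_bounds:
  assumes E: "simple_graph V E" and "M \<in> matchings E k"
  shows "k \<le> card E" and "2 * k \<le> card V"
proof -
  have M: "M \<subseteq> E" "card M = k" "pairwise disjnt M"
    using assms(2) by (auto simp: matchings_def)
  then show "k \<le> card E"
    using card_mono[OF finite_edges[OF E]] by blast
  have card2: "card e = 2" if "e \<in> M" for e
    using card_edge[OF E] M(1) that by blast
  then have "card (\<Union>M) = sum card M"
    using M(3) by (intro card_Union_disjoint) (auto intro: card_ge_0_finite)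
  also have "\<dots> = 2 * k"
    using card2 M(2) by simp
  finally have "card (\<Union>M) = 2 * k" .
  moreover have "\<Union>M \<subseteq> V"
    using E M(1) by (auto simp: simple_graph_def)
  ultimately show "2 * k \<le> card V"
    using E card_mono by (metis simple_graph_def)
qed

lemma matching_poly_eq_sum_le_half_card:
  assumes E: "simple_graph V E"
  shows "matching_poly E = (\<Sum>k \<le> card V div 2. monom (real (card (matchings E k))) k)"
proof -
  let ?m = "\<lambda>k. monom (real (card (matchings E k))) k"
  have vanish: "?m k = 0" if "card E < k \<or> card V div 2 < k" for k
    using that matching_card_bounds[OF E, of _ k] by fastforce
  have "matching_poly E = (\<Sum>k \<le> card E + card V. ?m k)"
    unfolding matching_poly_def using vanish by (intro sum.mono_neutral_left) auto
  also have "\<dots> = (\<Sum>k \<le> card V div 2. ?m k)"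
    using vanish by (intro sum.mono_neutral_right) auto
  finally show ?thesis .
qed

theorem theorem1:
  fixes V :: "'a set" and E :: "'a set set"
  assumes "forest V E"
  shows "(\<exists>c. p_expansion V E c) \<and>
    (\<forall>c. p_expansion V E c \<longrightarrow>
       (\<forall>k. 2 * k \<le> card V \<longrightarrow>
          c (two_one_part k (card V)) = (-1) ^ k * real (card (matchings E k))) \<and>
       matching_poly E = (\<Sum>k \<le> card V div 2. monom \<bar>c (two_one_part k (card V))\<bar> k))"
proof -
  have E: "simple_graph V E"
    using assms by (simp add: forest_def)
  have coeff: "c (two_one_part k (card V)) = (-1) ^ k * real (card (matchings E k))"
    if "p_expansion V E c" and "2 * k \<le> card V" for c k
    using p_expansion_two_one_coeff_unique[OF that(1) p_expansion_stanley_coeff[OF E] that(2)]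
      stanley_coeff_two_one_part[OF E that(2)] by simp
  have "matching_poly E = (\<Sum>k \<le> card V div 2. monom \<bar>c (two_one_part k (card V))\<bar> k)"
    if "p_expansion V E c" for c
    unfolding matching_poly_eq_sum_le_half_card[OF E]
    using coeff[OF that] by (intro sum.cong refl) (simp add: abs_mult)
  with coeff p_expansion_stanley_coeff[OF E] show ?thesis
    by blast
qed

end
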